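(* Let $n\ge 1$, $c\ge 0$ and $0\le k\le c$ be integers. There is a norm-preserving bijection between Gelfand–Tsetlin patterns with $n$ rows, parts in $\{0,1,\ldots,c\}$ and $a_{n,n}=k$, and strict plane partitions with parts in $\{1,2,\ldots,n\}$, at most $c$ columns and exactly $k$ parts equal to $n$. Under this bijection $(a_{1,n},a_{1,n-1},\ldots,a_{1,1})$ is the shape of the corresponding strict plane partition.
   Context: A Gelfand–Tsetlin pattern with $n$ rows and parts in $\{0,\ldots,c\}$ is an array of integers $(a_{i,j})_{1\le i\le n,\ i\le j\le n}$ with $0\le a_{i,j}\le c$ such that, setting $a_{i,i-1}=0$ and $a_{i,n+1}=c$, one has $a_{i,j}\le a_{i-1,j}\le a_{i,j+1}$ for all $2\le i\le n$ and $i-1\le j\le n$ (row $n$ consists of the single entry $a_{n,n}$ and is drawn on top; row $1$ has $n$ entries). Its norm is $\sum_{1\le i\le j\le n}a_{i,j}$. A strict plane partition of shape $\lambda=(\lambda_1\ge\lambda_2\ge\cdots\ge 0)$ is an array of non-negative integers $(\pi_{i,j})_{1\le j\le\lambda_i}$ with weakly decreasing rows and strictly decreasing columns; its norm is the sum of its entries; "at most $c$ columns" means $\lambda_1\le c$. *)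

theory Defs
  imports Main
begin

text \<open>Gelfand-Tsetlin patterns are functions a :: nat => nat => nat, where a i j is the
entry a_{i,j} for 1 <= i <= j <= n; entries outside this range are required to be 0
(canonical representation).\<close>

definition gt_ext :: "nat \<Rightarrow> nat \<Rightarrow> (nat \<Rightarrow> nat \<Rightarrow> nat) \<Rightarrow> nat \<Rightarrow> nat \<Rightarrow> nat" where
  "gt_ext n c a i j = (if j = i - 1 then 0 else if j = n + 1 then c else a i j)"

definition gt_pattern :: "nat \<Rightarrow> nat \<Rightarrow> (nat \<Rightarrow> nat \<Rightarrow> nat) \<Rightarrow> bool" where
  "gt_pattern n c a \<longleftrightarrow>
     (\<forall>i j. \<not> (1 \<le> i \<and> i \<le> j \<and> j \<le> n) \<longrightarrow> a i j = 0) \<and>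
     (\<forall>i j. 1 \<le> i \<and> i \<le> j \<and> j \<le> n \<longrightarrow> a i j \<le> c) \<and>
     (\<forall>i j. 2 \<le> i \<and> i \<le> n \<and> i - 1 \<le> j \<and> j \<le> n \<longrightarrow>
        gt_ext n c a i j \<le> a (i - 1) j \<and> a (i - 1) j \<le> gt_ext n c a i (j + 1))"

definition gt_norm :: "nat \<Rightarrow> (nat \<Rightarrow> nat \<Rightarrow> nat) \<Rightarrow> nat" where
  "gt_norm n a = (\<Sum>i=1..n. \<Sum>j=i..n. a i j)"

text \<open>Strict plane partitions: a pair (lambda, pi) where lambda i (i >= 1) is the length of
row i (lambda 0 = 0, weakly decreasing, eventually 0) and pi i j is the entry in row i,
column j for 1 <= j <= lambda i; pi is 0 outside the cells (canonical representation).\<close>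

definition spp_cells :: "(nat \<Rightarrow> nat) \<Rightarrow> (nat \<times> nat) set" where
  "spp_cells lam = {(i, j). 1 \<le> i \<and> 1 \<le> j \<and> j \<le> lam i}"

definition is_partition :: "(nat \<Rightarrow> nat) \<Rightarrow> bool" where
  "is_partition lam \<longleftrightarrow> lam 0 = 0 \<and> (\<forall>i\<ge>1. lam (i + 1) \<le> lam i) \<and>
     (\<exists>N. \<forall>i>N. lam i = 0)"

definition strict_plane_partition :: "(nat \<Rightarrow> nat) \<times> (nat \<Rightarrow> nat \<Rightarrow> nat) \<Rightarrow> bool" where
  "strict_plane_partition P \<longleftrightarrow> (case P of (lam, p) \<Rightarrow>
     is_partition lam \<and>
     (\<forall>i j. (i, j) \<notin> spp_cells lam \<longrightarrow> p i j = 0) \<and>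
     (\<forall>i j. (i, j) \<in> spp_cells lam \<and> (i, j + 1) \<in> spp_cells lam \<longrightarrow> p i (j + 1) \<le> p i j) \<and>
     (\<forall>i j. (i, j) \<in> spp_cells lam \<and> (i + 1, j) \<in> spp_cells lam \<longrightarrow> p (i + 1) j < p i j))"

definition spp_norm :: "(nat \<Rightarrow> nat) \<times> (nat \<Rightarrow> nat \<Rightarrow> nat) \<Rightarrow> nat" where
  "spp_norm P = (case P of (lam, p) \<Rightarrow> \<Sum>(i, j)\<in>spp_cells lam. p i j)"

definition GT_set :: "nat \<Rightarrow> nat \<Rightarrow> nat \<Rightarrow> (nat \<Rightarrow> nat \<Rightarrow> nat) set" where
  "GT_set n c k = {a. gt_pattern n c a \<and> a n n = k}"

definition SPP_set :: "nat \<Rightarrow> nat \<Rightarrow> nat \<Rightarrow> ((nat \<Rightarrow> nat) \<times> (nat \<Rightarrow> nat \<Rightarrow> nat)) set" where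
  "SPP_set n c k = {(lam, p). strict_plane_partition (lam, p) \<and>
      (\<forall>(i, j)\<in>spp_cells lam. 1 \<le> p i j \<and> p i j \<le> n) \<and>
      lam 1 \<le> c \<and>
      card {(i, j)\<in>spp_cells lam. p i j = n} = k}"

end

theory Submission
  imports Defs
begin

(* For fixed J the entries a_{1,J} >= a_{2,J} >= ... >= a_{J,J} form a partition with parts at
   most a_{1,J}; row n + 1 - J of the strict plane partition is its conjugate partition, so it has
   length a_{1,J} and entries at most J. Conjugation is an involution and preserves sums, which
   gives the inverse map and the norm. The interlacing a_{m,J} <= a_{m+1,J+1} translates into the
   strict decrease of columns, and as row i has entries at most n + 1 - i, the part n occurs only
   in the first row, exactly a_{n,n} times. *)

definition conjugate :: "nat \<Rightarrow> (nat \<Rightarrow> nat) \<Rightarrow> nat \<Rightarrow> nat" where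
  "conjugate N h t = card {m \<in> {1..N}. t \<le> h m}"

lemma conjugate_le: "conjugate N h t \<le> N"
proof -
  have "conjugate N h t \<le> card {1..N}"
    unfolding conjugate_def by (rule card_mono) auto
  then show ?thesis by simp
qed

lemma conjugate_mono:
  assumes "N \<le> N'" and "\<And>m. m \<in> {1..N} \<Longrightarrow> t \<le> h m \<Longrightarrow> t' \<le> h' m"
  shows "conjugate N h t \<le> conjugate N' h' t'"
  unfolding conjugate_def using assms by (intro card_mono) auto

lemma conjugate_cong:
  "(\<And>m. m \<in> {1..N} \<Longrightarrow> h m = h' m) \<Longrightarrow> conjugate N h t = conjugate N h' t"
  unfolding conjugate_def by (rule arg_cong[where f = card]) auto

lemma le_conjugate_iff:
  assumes anti: "antimono_on {1..N} h" and x: "x \<in> {1..N}"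
  shows "t \<le> h x \<longleftrightarrow> x \<le> conjugate N h t"
proof
  assume "t \<le> h x"
  have "t \<le> h m" if "m \<in> {1..x}" for m
    using monotone_onD[OF anti _ x, of m] that x \<open>t \<le> h x\<close> by auto
  then have "{1..x} \<subseteq> {m \<in> {1..N}. t \<le> h m}"
    using x by auto
  then have "card {1..x} \<le> conjugate N h t"
    unfolding conjugate_def by (rule card_mono[rotated]) auto
  then show "x \<le> conjugate N h t"
    by simp
next
  assume le: "x \<le> conjugate N h t"
  show "t \<le> h x"
  proof (rule ccontr)
    assume "\<not> t \<le> h x"
    have "m < x" if "m \<in> {1..N}" "t \<le> h m" for m
    proof (rule ccontr)
      assume "\<not> m < x"
      then have "h m \<le> h x" using monotone_onD[OF anti x that(1)] by simp
      then show False using \<open>\<not> t \<le> h x\<close> that(2) by simp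
    qed
    then have "{m \<in> {1..N}. t \<le> h m} \<subseteq> {1..<x}"
      by auto
    then have "conjugate N h t \<le> card {1..<x}"
      unfolding conjugate_def by (rule card_mono[rotated]) auto
    then show False using le x by auto
  qed
qed

lemma conjugate_conjugate:
  assumes "antimono_on {1..N} h" and "\<And>m. m \<in> {1..N} \<Longrightarrow> h m \<le> L" and "x \<in> {1..N}"
  shows "conjugate L (conjugate N h) x = h x"
proof -
  have "{t \<in> {1..L}. x \<le> conjugate N h t} = {1..h x}"
    using assms le_conjugate_iff[OF assms(1,3)] by fastforce
  then show ?thesis by (simp add: conjugate_def)
qed

lemma sum_conjugate:
  assumes "\<And>m. m \<in> {1..N} \<Longrightarrow> h m \<le> L"
  shows "(\<Sum>t=1..L. conjugate N h t) = (\<Sum>m=1..N. h m)"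
proof -
  have "(\<Sum>t=1..L. conjugate N h t) = (\<Sum>t=1..L. \<Sum>m=1..N. of_bool (t \<le> h m))"
    by (simp add: conjugate_def Int_def conj_commute)
  also have "\<dots> = (\<Sum>m=1..N. \<Sum>t=1..L. of_bool (t \<le> h m))"
    by (rule sum.swap)
  also have "\<dots> = (\<Sum>m=1..N. h m)"
  proof (rule sum.cong)
    fix m assume "m \<in> {1..N}"
    then have "{1..L} \<inter> {t. t \<le> h m} = {1..h m}" using assms[of m] by auto
    then show "(\<Sum>t=1..L. of_bool (t \<le> h m)) = h m" by simp
  qed simp
  finally show ?thesis .
qed

lemma gt_pattern_iff:
  "gt_pattern n c a \<longleftrightarrow>
     (\<forall>i j. \<not> (1 \<le> i \<and> i \<le> j \<and> j \<le> n) \<longrightarrow> a i j = 0) \<and> (\<forall>i j. a i j \<le> c) \<and>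
     (\<forall>m J. 1 \<le> m \<longrightarrow> a (Suc m) J \<le> a m J) \<and>
     (\<forall>m J. 1 \<le> m \<longrightarrow> J < n \<longrightarrow> a m J \<le> a (Suc m) (Suc J))"
    (is "_ \<longleftrightarrow> ?zero \<and> ?bound \<and> ?down \<and> ?interlace")
proof
  assume gt: "gt_pattern n c a"
  then have zero: ?zero and inter:
    "\<And>i j. 2 \<le> i \<Longrightarrow> i \<le> n \<Longrightarrow> i - 1 \<le> j \<Longrightarrow> j \<le> n \<Longrightarrow>
       gt_ext n c a i j \<le> a (i - 1) j \<and> a (i - 1) j \<le> gt_ext n c a i (j + 1)"
    unfolding gt_pattern_def by blast+
  have ?bound
    using gt zero unfolding gt_pattern_def by (metis zero_le)
  moreover have ?down
  proof (intro allI impI)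
    fix m J :: nat assume "1 \<le> m"
    then show "a (Suc m) J \<le> a m J"
      using zero inter[of "Suc m" J] by (cases "Suc m \<le> J \<and> J \<le> n") (auto simp: gt_ext_def)
  qed
  moreover have ?interlace
  proof (intro allI impI)
    fix m J :: nat assume "1 \<le> m" "J < n"
    then show "a m J \<le> a (Suc m) (Suc J)"
      using zero inter[of "Suc m" J] by (cases "m \<le> J") (auto simp: gt_ext_def)
  qed
  ultimately show "?zero \<and> ?bound \<and> ?down \<and> ?interlace"
    using zero by blast
next
  assume "?zero \<and> ?bound \<and> ?down \<and> ?interlace"
  then have zero: ?zero and bound: ?bound and down: ?down and interlace: ?interlace
    by blast+
  have "gt_ext n c a i j \<le> a (i - 1) j \<and> a (i - 1) j \<le> gt_ext n c a i (j + 1)"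
    if "2 \<le> i" "i \<le> n" "i - 1 \<le> j" "j \<le> n" for i j
  proof -
    obtain m where "i = Suc m" "1 \<le> m" using \<open>2 \<le> i\<close> by (cases i) auto
    then show ?thesis
      using that down interlace bound by (cases "j = n") (auto simp: gt_ext_def)
  qed
  then show "gt_pattern n c a"
    unfolding gt_pattern_def using zero bound by blast
qed

definition shape_of_gt :: "nat \<Rightarrow> (nat \<Rightarrow> nat \<Rightarrow> nat) \<Rightarrow> nat \<Rightarrow> nat" where
  "shape_of_gt n a i = (if 1 \<le> i \<and> i \<le> n then a 1 (n + 1 - i) else 0)"

definition entries_of_gt :: "nat \<Rightarrow> (nat \<Rightarrow> nat \<Rightarrow> nat) \<Rightarrow> nat \<Rightarrow> nat \<Rightarrow> nat" where
  "entries_of_gt n a i j =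
     (if (i, j) \<in> spp_cells (shape_of_gt n a) then conjugate n (\<lambda>m. a m (n + 1 - i)) j else 0)"

definition gt_of_spp :: "nat \<Rightarrow> (nat \<Rightarrow> nat) \<Rightarrow> (nat \<Rightarrow> nat \<Rightarrow> nat) \<Rightarrow> nat \<Rightarrow> nat \<Rightarrow> nat" where
  "gt_of_spp n lam p m J =
     (if 1 \<le> m \<and> m \<le> J \<and> J \<le> n then conjugate (lam (n + 1 - J)) (p (n + 1 - J)) m else 0)"

lemma spp_cells_shape_of_gt:
  "(i, j) \<in> spp_cells (shape_of_gt n a) \<longleftrightarrow> 1 \<le> i \<and> i \<le> n \<and> 1 \<le> j \<and> j \<le> a 1 (n + 1 - i)"
  by (auto simp: spp_cells_def shape_of_gt_def)

context
  fixes n c :: nat and a :: "nat \<Rightarrow> nat \<Rightarrow> nat"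
  assumes gt: "gt_pattern n c a"
begin

lemma gt_zero_outside: "\<not> (1 \<le> i \<and> i \<le> j \<and> j \<le> n) \<Longrightarrow> a i j = 0"
  using gt by (simp add: gt_pattern_iff)

lemma gt_le_bound: "a i j \<le> c"
  using gt by (simp add: gt_pattern_iff)

lemma gt_interlace: "1 \<le> m \<Longrightarrow> J < n \<Longrightarrow> a m J \<le> a (Suc m) (Suc J)"
  using gt by (simp add: gt_pattern_iff)

lemma gt_Suc_row_le: "1 \<le> m \<Longrightarrow> a (Suc m) J \<le> a m J"
  using gt by (simp add: gt_pattern_iff)

lemma gt_diagonal_antimono: "antimono_on {1..N} (\<lambda>m. a m J)"
proof (rule monotone_onI)
  fix x y :: nat assume "x \<in> {1..N}" "x \<le> y"
  have "a (Suc m) J \<le> a m J" if "m \<in> {1..}" for m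
    using gt_Suc_row_le that by simp
  moreover have "{x..<y} \<subseteq> {1..}"
    using \<open>x \<in> {1..N}\<close> by auto
  ultimately show "a y J \<le> a x J"
    using lift_Suc_antimono_le_ivl[of "{1..}" "\<lambda>m. a m J" x y] \<open>x \<le> y\<close> by blast
qed

lemma gt_le_first_row: "1 \<le> m \<Longrightarrow> a m J \<le> a 1 J"
  using monotone_onD[OF gt_diagonal_antimono, of 1 m "m" J] by simp

lemma gt_first_row_mono: "J < n \<Longrightarrow> a 1 J \<le> a 1 (Suc J)"
  using gt_interlace[of 1 J] gt_le_first_row[of "Suc 1" "Suc J"] by simp

lemma le_conjugate_gt_iff: "m \<in> {1..n} \<Longrightarrow> t \<le> a m J \<longleftrightarrow> m \<le> conjugate n (\<lambda>m. a m J) t"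
  by (rule le_conjugate_iff[OF gt_diagonal_antimono])

lemma conjugate_gt_diagonal_less:
  assumes "J < n" and "1 \<le> t" "t \<le> a 1 J"
  shows "conjugate n (\<lambda>m. a m J) t < conjugate n (\<lambda>m. a m (Suc J)) t"
proof -
  define q where "q = conjugate n (\<lambda>m. a m J) t"
  have "1 \<le> q"
    using le_conjugate_gt_iff[of 1 t J] assms unfolding q_def by simp
  moreover have "q \<le> n"
    unfolding q_def by (rule conjugate_le)
  ultimately have "t \<le> a q J"
    using le_conjugate_gt_iff[of q t J] by (simp add: q_def)
  then have "q \<le> J"
    using gt_zero_outside[of q J] \<open>1 \<le> q\<close> assms by (cases "q \<le> J") auto
  have "t \<le> a (Suc q) (Suc J)"
    using \<open>t \<le> a q J\<close> gt_interlace[of q J] \<open>1 \<le> q\<close> assms by simp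
  then have "Suc q \<le> conjugate n (\<lambda>m. a m (Suc J)) t"
    using le_conjugate_gt_iff[of "Suc q" t "Suc J"] \<open>q \<le> J\<close> assms by simp
  then show ?thesis by (simp add: q_def)
qed

lemma is_partition_shape_of_gt: "is_partition (shape_of_gt n a)"
  unfolding is_partition_def
proof (intro conjI allI impI)
  show "shape_of_gt n a 0 = 0"
    by (simp add: shape_of_gt_def)
  show "\<exists>N. \<forall>i>N. shape_of_gt n a i = 0"
    by (rule exI[of _ n]) (simp add: shape_of_gt_def)
  fix i :: nat assume "1 \<le> i"
  then show "shape_of_gt n a (i + 1) \<le> shape_of_gt n a i"
    using gt_first_row_mono[of "n - i"]
    by (cases "i + 1 \<le> n") (auto simp: shape_of_gt_def Suc_diff_le)
qed

lemma strict_plane_partition_of_gt: "strict_plane_partition (shape_of_gt n a, entries_of_gt n a)"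
  unfolding strict_plane_partition_def prod.case
proof (intro conjI allI impI)
  show "is_partition (shape_of_gt n a)"
    by (rule is_partition_shape_of_gt)
next
  fix i j
  show "(i, j) \<notin> spp_cells (shape_of_gt n a) \<Longrightarrow> entries_of_gt n a i j = 0"
    by (simp add: entries_of_gt_def)
  show "entries_of_gt n a i (j + 1) \<le> entries_of_gt n a i j"
    if "(i, j) \<in> spp_cells (shape_of_gt n a) \<and> (i, j + 1) \<in> spp_cells (shape_of_gt n a)"
    using that by (auto simp: entries_of_gt_def intro: conjugate_mono)
  assume cells: "(i, j) \<in> spp_cells (shape_of_gt n a) \<and> (i + 1, j) \<in> spp_cells (shape_of_gt n a)"
  then have "1 \<le> i" "i + 1 \<le> n" "1 \<le> j" "j \<le> a 1 (n - i)"
    by (auto simp: spp_cells_shape_of_gt)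
  then have "conjugate n (\<lambda>m. a m (n - i)) j < conjugate n (\<lambda>m. a m (Suc (n - i))) j"
    by (intro conjugate_gt_diagonal_less) auto
  then show "entries_of_gt n a (i + 1) j < entries_of_gt n a i j"
    using cells \<open>i + 1 \<le> n\<close> by (simp add: entries_of_gt_def Suc_diff_le)
qed

lemma entries_of_gt_range:
  assumes "(i, j) \<in> spp_cells (shape_of_gt n a)"
  shows "1 \<le> entries_of_gt n a i j \<and> entries_of_gt n a i j \<le> n"
  using assms le_conjugate_gt_iff[of 1 j "n + 1 - i"] conjugate_le
  by (auto simp: entries_of_gt_def spp_cells_shape_of_gt)

lemma card_entries_of_gt_eq_top:
  "card {(i, j) \<in> spp_cells (shape_of_gt n a). entries_of_gt n a i j = n} = a n n"
proof -
  have "{(i, j) \<in> spp_cells (shape_of_gt n a). entries_of_gt n a i j = n} = (\<lambda>j. (1, j)) ` {1..a n n}"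
  proof (intro subset_antisym subsetI)
    fix x assume "x \<in> {(i, j) \<in> spp_cells (shape_of_gt n a). entries_of_gt n a i j = n}"
    then obtain i j where x: "x = (i, j)" and cell: "(i, j) \<in> spp_cells (shape_of_gt n a)"
      and "conjugate n (\<lambda>m. a m (n + 1 - i)) j = n"
      by (auto simp: entries_of_gt_def)
    moreover have "1 \<le> i" "i \<le> n" "1 \<le> j"
      using cell by (auto simp: spp_cells_shape_of_gt)
    ultimately have "j \<le> a n (n + 1 - i)"
      using le_conjugate_gt_iff[of n j "n + 1 - i"] by simp
    have "i = 1"
    proof (rule ccontr)
      assume "i \<noteq> 1"
      then have "n + 1 - i < n"
        using \<open>1 \<le> i\<close> \<open>i \<le> n\<close> by linarith
      then have "a n (n + 1 - i) = 0"
        by (simp add: gt_zero_outside)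
      then show False
        using \<open>1 \<le> j\<close> \<open>j \<le> a n (n + 1 - i)\<close> by simp
    qed
    then show "x \<in> (\<lambda>j. (1, j)) ` {1..a n n}"
      using x \<open>1 \<le> j\<close> \<open>j \<le> a n (n + 1 - i)\<close> by simp
  next
    fix x :: "nat \<times> nat" assume "x \<in> (\<lambda>j. (1, j)) ` {1..a n n}"
    then obtain j where x: "x = (1, j)" and j: "1 \<le> j" "j \<le> a n n"
      by auto
    then have "1 \<le> n"
      using gt_zero_outside[of n n] by (cases n) auto
    then have cell: "(1, j) \<in> spp_cells (shape_of_gt n a)"
      using j gt_le_first_row[of n n] by (simp add: spp_cells_shape_of_gt)
    have "n \<le> conjugate n (\<lambda>m. a m n) j"
      using le_conjugate_gt_iff[of n j n] j \<open>1 \<le> n\<close> by simp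
    then have "entries_of_gt n a 1 j = n"
      using cell conjugate_le[of n "\<lambda>m. a m n" j] by (simp add: entries_of_gt_def)
    then show "x \<in> {(i, j) \<in> spp_cells (shape_of_gt n a). entries_of_gt n a i j = n}"
      using x cell by simp
  qed
  then show ?thesis
    by (simp add: card_image inj_on_def)
qed

lemma spp_norm_of_gt: "spp_norm (shape_of_gt n a, entries_of_gt n a) = gt_norm n a"
proof -
  have cells: "spp_cells (shape_of_gt n a) = Sigma {1..n} (\<lambda>i. {1..a 1 (n + 1 - i)})"
    by (auto simp: spp_cells_shape_of_gt)
  have "spp_norm (shape_of_gt n a, entries_of_gt n a) =
      (\<Sum>i=1..n. \<Sum>j=1..a 1 (n + 1 - i). conjugate n (\<lambda>m. a m (n + 1 - i)) j)"
    unfolding spp_norm_def prod.case cells sum.Sigma[OF finite_atLeastAtMost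
      ballI[OF finite_atLeastAtMost], symmetric]
    by (intro sum.cong refl) (simp add: entries_of_gt_def spp_cells_shape_of_gt)
  also have "\<dots> = (\<Sum>i=1..n. \<Sum>m=1..n. a m (n + 1 - i))"
    by (intro sum.cong refl sum_conjugate gt_le_first_row) simp
  also have "\<dots> = (\<Sum>J=1..n. \<Sum>m=1..n. a m J)"
    using sum.atLeastAtMost_rev[of "\<lambda>J. \<Sum>m=1..n. a m J" 1 n] by simp
  also have "\<dots> = (\<Sum>m=1..n. \<Sum>J=1..n. a m J)"
    by (rule sum.swap)
  also have "\<dots> = (\<Sum>m=1..n. \<Sum>J=m..n. a m J)"
    by (intro sum.cong refl sum.mono_neutral_right) (auto intro: gt_zero_outside)
  finally show ?thesis
    by (simp add: gt_norm_def)
qed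

lemma gt_of_spp_of_gt: "gt_of_spp n (shape_of_gt n a) (entries_of_gt n a) = a"
proof (intro ext)
  fix m J
  show "gt_of_spp n (shape_of_gt n a) (entries_of_gt n a) m J = a m J"
  proof (cases "1 \<le> m \<and> m \<le> J \<and> J \<le> n")
    case True
    define i where "i = n + 1 - J"
    have i: "1 \<le> i" "i \<le> n" "n + 1 - i = J"
      using True by (auto simp: i_def)
    then have shape: "shape_of_gt n a i = a 1 J"
      by (simp add: shape_of_gt_def)
    have "conjugate (a 1 J) (entries_of_gt n a i) m = conjugate (a 1 J) (conjugate n (\<lambda>m. a m J)) m"
      using i by (intro conjugate_cong) (simp add: entries_of_gt_def spp_cells_shape_of_gt)
    also have "\<dots> = a m J"
      using True by (intro conjugate_conjugate gt_diagonal_antimono gt_le_first_row) auto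
    finally show ?thesis
      using True shape by (simp add: gt_of_spp_def i_def)
  next
    case False
    then show ?thesis
      by (auto simp: gt_of_spp_def gt_zero_outside)
  qed
qed

lemma of_gt_in_SPP_set: "(shape_of_gt n a, entries_of_gt n a) \<in> SPP_set n c (a n n)"
  unfolding SPP_set_def
  using strict_plane_partition_of_gt entries_of_gt_range card_entries_of_gt_eq_top gt_le_bound
  by (auto simp: shape_of_gt_def)

end

lemma strict_plane_partitionD:
  assumes "strict_plane_partition (lam, p)"
  shows spp_is_partition: "is_partition lam"
    and spp_zero_outside: "(i, j) \<notin> spp_cells lam \<Longrightarrow> p i j = 0"
    and spp_row_le: "(i, j) \<in> spp_cells lam \<Longrightarrow> (i, j + 1) \<in> spp_cells lam \<Longrightarrow> p i (j + 1) \<le> p i j"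
    and spp_col_less: "(i, j) \<in> spp_cells lam \<Longrightarrow> (i + 1, j) \<in> spp_cells lam \<Longrightarrow> p (i + 1) j < p i j"
  using assms by (simp_all add: strict_plane_partition_def)

lemma is_partition_antimono:
  assumes "is_partition lam"
  shows "antimono_on {1..} lam"
proof (rule monotone_onI)
  fix x y :: nat assume "x \<in> {1..}" "x \<le> y"
  moreover have "lam (Suc t) \<le> lam t" if "t \<in> {1..}" for t
    using assms that by (simp add: is_partition_def)
  moreover have "{x..<y} \<subseteq> {1..}"
    using \<open>x \<in> {1..}\<close> by auto
  ultimately show "lam y \<le> lam x"
    using lift_Suc_antimono_le_ivl[of "{1..}" lam x y] by blast
qed

lemma spp_row_antimono:
  assumes spp: "strict_plane_partition (lam, p)" and "1 \<le> i"
  shows "antimono_on {1..lam i} (p i)"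
proof (rule monotone_onI)
  fix x y assume "x \<in> {1..lam i}" "y \<in> {1..lam i}" "x \<le> y"
  moreover have "p i (Suc t) \<le> p i t" if "t \<in> {1..<lam i}" for t
    using spp_row_le[OF spp, of i t] that \<open>1 \<le> i\<close> by (simp add: spp_cells_def)
  moreover have "{x..<y} \<subseteq> {1..<lam i}"
    using \<open>x \<in> {1..lam i}\<close> \<open>y \<in> {1..lam i}\<close> by auto
  ultimately show "p i y \<le> p i x"
    using lift_Suc_antimono_le_ivl[of "{1..<lam i}" "p i" x y] by blast
qed

context
  fixes n :: nat and lam :: "nat \<Rightarrow> nat" and p :: "nat \<Rightarrow> nat \<Rightarrow> nat"
  assumes spp: "strict_plane_partition (lam, p)"
    and entries: "\<forall>(i, j) \<in> spp_cells lam. 1 \<le> p i j \<and> p i j \<le> n"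
begin

lemma spp_entry_bound: "(i, j) \<in> spp_cells lam \<Longrightarrow> p i j + i \<le> n + 1"
proof (induction i arbitrary: j)
  case 0
  then show ?case by (simp add: spp_cells_def)
next
  case (Suc i)
  show ?case
  proof (cases "i = 0")
    case True
    then show ?thesis using Suc.prems entries by auto
  next
    case False
    have "lam (Suc i) \<le> lam i"
      using monotone_onD[OF is_partition_antimono[OF spp_is_partition[OF spp]], of i "Suc i"] False
      by simp
    then have "(i, j) \<in> spp_cells lam"
      using Suc.prems False by (auto simp: spp_cells_def)
    then show ?thesis
      using Suc.IH spp_col_less[OF spp, of i j] Suc.prems by fastforce
  qed
qed

lemma spp_shape_zero:
  assumes "n < i"
  shows "lam i = 0"
proof (rule ccontr)
  assume "lam i \<noteq> 0"
  then have "(i, 1) \<in> spp_cells lam"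
    using assms by (simp add: spp_cells_def)
  then have "p i 1 + i \<le> n + 1" "1 \<le> p i 1"
    using spp_entry_bound entries by auto
  then show False
    using assms by simp
qed

lemma gt_of_spp_eq:
  assumes "1 \<le> m" "1 \<le> J" "J \<le> n"
  shows "gt_of_spp n lam p m J = conjugate (lam (n + 1 - J)) (p (n + 1 - J)) m"
proof (cases "m \<le> J")
  case True
  then show ?thesis using assms by (simp add: gt_of_spp_def)
next
  case False
  have "p (n + 1 - J) t < m" if "t \<in> {1..lam (n + 1 - J)}" for t
  proof -
    have "(n + 1 - J, t) \<in> spp_cells lam"
      using that assms by (simp add: spp_cells_def)
    then have "p (n + 1 - J) t + (n + 1 - J) \<le> n + 1"
      by (rule spp_entry_bound)
    then show ?thesis
      using False assms by linarith
  qed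
  then have "conjugate (lam (n + 1 - J)) (p (n + 1 - J)) m = 0"
    by (fastforce simp: conjugate_def)
  then show ?thesis
    using False by (simp add: gt_of_spp_def)
qed

lemma gt_pattern_of_spp:
  assumes "lam 1 \<le> c"
  shows "gt_pattern n c (gt_of_spp n lam p)"
  unfolding gt_pattern_iff
proof (intro conjI allI impI)
  have lam_anti: "lam y \<le> lam x" if "1 \<le> x" "x \<le> y" for x y
    using monotone_onD[OF is_partition_antimono[OF spp_is_partition[OF spp]], of x y] that by simp
  fix m J :: nat
  show "\<not> (1 \<le> m \<and> m \<le> J \<and> J \<le> n) \<Longrightarrow> gt_of_spp n lam p m J = 0"
    by (auto simp: gt_of_spp_def)
  show "gt_of_spp n lam p m J \<le> c"
  proof (cases "1 \<le> m \<and> m \<le> J \<and> J \<le> n")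
    case True
    then have "gt_of_spp n lam p m J \<le> lam (n + 1 - J)"
      by (simp add: gt_of_spp_def conjugate_le)
    also have "\<dots> \<le> lam 1"
      using True by (intro lam_anti) auto
    finally show ?thesis
      using assms by simp
  qed (auto simp: gt_of_spp_def)
  show "gt_of_spp n lam p (Suc m) J \<le> gt_of_spp n lam p m J" if "1 \<le> m"
  proof (cases "1 \<le> J \<and> J \<le> n")
    case True
    then show ?thesis
      using that by (simp add: gt_of_spp_eq conjugate_mono)
  next
    case False
    then show ?thesis by (auto simp: gt_of_spp_def)
  qed
  show "gt_of_spp n lam p m J \<le> gt_of_spp n lam p (Suc m) (Suc J)" if "1 \<le> m" "J < n"
  proof (cases "J = 0")
    case True
    then show ?thesis by (simp add: gt_of_spp_def)
  next
    case False
    define i where "i = n - J"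
    have i: "1 \<le> i" "n + 1 - J = i + 1" "n + 1 - Suc J = i"
      using False \<open>J < n\<close> by (auto simp: i_def)
    have "lam (i + 1) \<le> lam i"
      using lam_anti i by simp
    moreover have "Suc m \<le> p i t" if "t \<in> {1..lam (i + 1)}" "m \<le> p (i + 1) t" for t
    proof -
      have "(i, t) \<in> spp_cells lam" "(i + 1, t) \<in> spp_cells lam"
        using that \<open>lam (i + 1) \<le> lam i\<close> i by (auto simp: spp_cells_def)
      then show ?thesis
        using spp_col_less[OF spp] that(2) by fastforce
    qed
    ultimately have "conjugate (lam (i + 1)) (p (i + 1)) m \<le> conjugate (lam i) (p i) (Suc m)"
      by (rule conjugate_mono)
    then show ?thesis
      using that False i by (simp add: gt_of_spp_eq)
  qed
qed

lemma shape_of_gt_of_spp: "shape_of_gt n (gt_of_spp n lam p) = lam"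
proof
  fix i
  show "shape_of_gt n (gt_of_spp n lam p) i = lam i"
  proof (cases "1 \<le> i \<and> i \<le> n")
    case True
    then have "1 \<le> n + 1 - i" "n + 1 - i \<le> n" "n + 1 - (n + 1 - i) = i"
      by auto
    then have "gt_of_spp n lam p 1 (n + 1 - i) = conjugate (lam i) (p i) 1"
      using gt_of_spp_eq[of 1 "n + 1 - i"] by simp
    moreover have "{t \<in> {1..lam i}. 1 \<le> p i t} = {1..lam i}"
      using entries True by (auto simp: spp_cells_def)
    ultimately show ?thesis
      using True by (simp add: shape_of_gt_def conjugate_def)
  next
    case False
    then have "lam i = 0"
      using spp_shape_zero spp_is_partition[OF spp] by (cases "i = 0") (auto simp: is_partition_def)
    then show ?thesis
      using False by (auto simp: shape_of_gt_def)
  qed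
qed

lemma entries_of_gt_of_spp: "entries_of_gt n (gt_of_spp n lam p) = p"
proof (intro ext)
  fix i j
  show "entries_of_gt n (gt_of_spp n lam p) i j = p i j"
  proof (cases "(i, j) \<in> spp_cells lam")
    case True
    then have ij: "1 \<le> i" "i \<le> n" "j \<in> {1..lam i}"
      using spp_shape_zero[of i] by (auto simp: spp_cells_def not_le[symmetric])
    have "conjugate n (\<lambda>m. gt_of_spp n lam p m (n + 1 - i)) j = conjugate n (conjugate (lam i) (p i)) j"
      using ij by (intro conjugate_cong) (simp add: gt_of_spp_eq)
    also have "\<dots> = p i j"
      using ij entries by (intro conjugate_conjugate spp_row_antimono[OF spp]) (auto simp: spp_cells_def)
    finally show ?thesis
      using True by (simp add: entries_of_gt_def shape_of_gt_of_spp)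
  next
    case False
    then show ?thesis
      by (simp add: entries_of_gt_def shape_of_gt_of_spp spp_zero_outside[OF spp])
  qed
qed

end

lemma gt_of_spp_in_GT_set:
  assumes "(lam, p) \<in> SPP_set n c k"
  shows "gt_of_spp n lam p \<in> GT_set n c k"
proof -
  have spp: "strict_plane_partition (lam, p)" and entries: "\<forall>(i, j) \<in> spp_cells lam. 1 \<le> p i j \<and> p i j \<le> n"
    and "lam 1 \<le> c" and count: "card {(i, j) \<in> spp_cells lam. p i j = n} = k"
    using assms by (auto simp: SPP_set_def)
  have gt: "gt_pattern n c (gt_of_spp n lam p)"
    using gt_pattern_of_spp[OF spp entries \<open>lam 1 \<le> c\<close>] .
  have "gt_of_spp n lam p n n = k"
    using card_entries_of_gt_eq_top[OF gt] count
    by (simp add: shape_of_gt_of_spp[OF spp entries] entries_of_gt_of_spp[OF spp entries])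
  then show ?thesis
    using gt by (simp add: GT_set_def)
qed

theorem lemma2:
  fixes n c k :: nat
  assumes "n \<ge> 1" and "k \<le> c"
  shows "\<exists>f. bij_betw f (GT_set n c k) (SPP_set n c k) \<and>
           (\<forall>a\<in>GT_set n c k. spp_norm (f a) = gt_norm n a) \<and>
           (\<forall>a\<in>GT_set n c k. fst (f a) = (\<lambda>i. if 1 \<le> i \<and> i \<le> n then a 1 (n + 1 - i) else 0))"
proof (intro exI conjI)
  let ?f = "\<lambda>a. (shape_of_gt n a, entries_of_gt n a)"
  show "bij_betw ?f (GT_set n c k) (SPP_set n c k)"
  proof (rule bij_betw_byWitness[where f' = "\<lambda>(lam, p). gt_of_spp n lam p"])
    show "\<forall>a \<in> GT_set n c k. (\<lambda>(lam, p). gt_of_spp n lam p) (?f a) = a"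
      by (auto simp: GT_set_def intro: gt_of_spp_of_gt)
    show "\<forall>P \<in> SPP_set n c k. ?f ((\<lambda>(lam, p). gt_of_spp n lam p) P) = P"
      by (auto simp: SPP_set_def shape_of_gt_of_spp entries_of_gt_of_spp)
    show "?f ` GT_set n c k \<subseteq> SPP_set n c k"
      using of_gt_in_SPP_set by (auto simp: GT_set_def)
    show "(\<lambda>(lam, p). gt_of_spp n lam p) ` SPP_set n c k \<subseteq> GT_set n c k"
      using gt_of_spp_in_GT_set by auto
  qed
  show "\<forall>a \<in> GT_set n c k. spp_norm (?f a) = gt_norm n a"
    by (auto simp: GT_set_def intro: spp_norm_of_gt)
  show "\<forall>a \<in> GT_set n c k. fst (?f a) = (\<lambda>i. if 1 \<le> i \<and> i \<le> n then a 1 (n + 1 - i) else 0)"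
    by (simp add: shape_of_gt_def [abs_def])
qed

end
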